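(* For every $\pi\in B_n$, $\ell_B(\pi)\equiv\ell_B(dp(\pi))\pmod 2$.
   Context: $B_n$ is the set of words $\pi=\pi_1\cdots\pi_n$ with $\pi_i\in\{\pm1,\dots,\pm n\}$ and $|\pi_1|\cdots|\pi_n|$ a permutation of $[n]$. $\mathrm{inv}(\pi)=\#\{(i,j):i<j,\pi_i>\pi_j\}$ (usual order), $\ell_B(\pi)=\mathrm{inv}(\pi)-\sum_{i:\pi_i<0}\pi_i$ (equal to $0$ for the empty word). For a word of nonzero integers with distinct absolute values $a_1<\dots<a_m$, its reduction replaces each letter $\pm a_j$ by $\pm j$. $dp(\pi)$ is the reduction of the subword of letters $\pi_i$ with $\pi_i\ne i$. *)

theory Defs
  imports Main
begin

definition signed_perms :: "nat \<Rightarrow> int list set" where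
  "signed_perms n = {w. length w = n \<and> distinct (map abs w) \<and> set (map abs w) = {1..int n}}"

definition inv :: "int list \<Rightarrow> nat" where
  "inv w = card {(i, j). i < j \<and> j < length w \<and> w ! i > w ! j}"

definition ellB :: "int list \<Rightarrow> int" where
  "ellB w = int (inv w) - (\<Sum>i\<in>{i. i < length w \<and> w ! i < 0}. w ! i)"

text \<open>Reduction: replace the letter +-a_j by +-j, where a_1 < ... < a_m are the
  absolute values of the letters.\<close>
definition reduction :: "int list \<Rightarrow> int list" where
  "reduction w = map (\<lambda>x. sgn x * int (card {y \<in> set (map abs w). y \<le> \<bar>x\<bar>})) w"

definition dp :: "int list \<Rightarrow> int list" where
  "dp w = reduction (map fst (filter (\<lambda>(x, i). x \<noteq> int i) (zip w [1..<length w + 1])))"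

end

theory Submission
  imports Defs
begin

text \<open>If the absolute values of a word \<open>v\<close> are \<open>1, \<dots>, m\<close>, a negative letter \<open>x\<close>
  contributes \<open>|x| = 1 + #{y. |y| < |x|}\<close> to \<open>\<ell>\<^sub>B(v)\<close>, so \<open>\<ell>\<^sub>B(v)\<close> is
  \<open>inv v + neg v\<close> plus the number of pairs of letters whose letter of larger absolute
  value is negative. A pair is counted there exactly when it is an inversion of precisely one of
  \<open>v\<close> and \<open>|v|\<close>; hence \<open>\<ell>\<^sub>B(v) \<equiv> inv |v| + neg v (mod 2)\<close>. Reduction changes
  neither \<open>inv |v|\<close> nor \<open>neg v\<close>. Fixed points are positive, and deleting a fixed
  point \<open>k\<close> changes \<open>inv |v|\<close> by an even number: as many letters before it exceed \<open>k\<close>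
  as letters after it are below \<open>k\<close>.\<close>

lemma inv_Cons: "inv (x # xs) = length (filter (\<lambda>y. y < x) xs) + inv xs"
proof -
  let ?J = "{j. j < length xs \<and> xs ! j < x}"
  let ?T = "{(i, j). i < j \<and> j < length xs \<and> xs ! i > xs ! j}"
  have split: "{(i, j). i < j \<and> j < length (x # xs) \<and> (x # xs) ! i > (x # xs) ! j}
      = (\<lambda>j. (0, Suc j)) ` ?J \<union> (\<lambda>(i, j). (Suc i, Suc j)) ` ?T"
    (is "?S = ?R")
  proof
    show "?S \<subseteq> ?R"
    proof
      fix p assume "p \<in> ?S"
      then obtain i j where "p = (i, j)" "i < j" "j < Suc (length xs)" "(x # xs) ! i > (x # xs) ! j"
        by auto
      then show "p \<in> ?R"
        by (cases i; cases j) (auto simp: image_iff)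
    qed
  qed auto
  have "finite ?T"
    by (rule finite_subset[of _ "{..<length xs} \<times> {..<length xs}"]) auto
  then have "card ?S = card ?J + card ?T"
    unfolding split
    by (subst card_Un_disjoint) (auto simp: card_image inj_on_def)
  then show ?thesis
    by (simp add: inv_def length_filter_conv_card)
qed

lemma inv_append_Cons:
  "inv (xs @ x # ys) = inv (xs @ ys) + length (filter (\<lambda>a. x < a) xs) + length (filter (\<lambda>b. b < x) ys)"
  by (induction xs) (auto simp: inv_Cons)

lemma inv_map_strict_mono:
  fixes f :: "int \<Rightarrow> int"
  assumes "strict_mono_on (set xs) f"
  shows "inv (map f xs) = inv xs"
  using assms
proof (induction xs)
  case (Cons x xs)
  have "filter (\<lambda>z. z < f x) (map f xs) = map f (filter (\<lambda>y. f y < f x) xs)"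
    by (simp add: filter_map comp_def)
  also have "filter (\<lambda>y. f y < f x) xs = filter (\<lambda>y. y < x) xs"
    using strict_mono_on_less[OF Cons.prems] by (intro filter_cong) auto
  moreover have "strict_mono_on (set xs) f"
    using Cons.prems by (rule monotone_on_subset) auto
  ultimately show ?case
    using Cons.IH by (simp add: inv_Cons)
qed simp

lemma inv_remove_balanced:
  assumes "x \<notin> set xs" "length (filter (\<lambda>a. a < x) (xs @ ys)) = length xs"
  shows "inv (xs @ x # ys) = inv (xs @ ys) + 2 * length (filter (\<lambda>a. x < a) xs)"
proof -
  have "filter (\<lambda>a. \<not> a < x) xs = filter (\<lambda>a. x < a) xs"
    using assms(1) by (intro filter_cong) (auto simp: not_less_iff_gr_or_eq)
  then have "length (filter (\<lambda>a. a < x) xs) + length (filter (\<lambda>a. x < a) xs) = length xs"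
    using sum_length_filter_compl[of "\<lambda>a. a < x" xs] by simp
  then show ?thesis
    using assms(2) by (simp add: inv_append_Cons)
qed

definition neg_count :: "int list \<Rightarrow> nat" where
  "neg_count v = length (filter (\<lambda>x. x < 0) v)"

definition abs_below :: "int list \<Rightarrow> int \<Rightarrow> nat" where
  "abs_below v x = length (filter (\<lambda>y. \<bar>y\<bar> < \<bar>x\<bar>) v)"

definition larger_is_neg :: "int \<Rightarrow> int \<Rightarrow> bool" where
  "larger_is_neg x y \<longleftrightarrow> (x < 0 \<and> \<bar>y\<bar> < \<bar>x\<bar>) \<or> (y < 0 \<and> \<bar>x\<bar> < \<bar>y\<bar>)"

fun neg_pairs :: "int list \<Rightarrow> nat" where
  "neg_pairs [] = 0"
| "neg_pairs (x # xs) = length (filter (larger_is_neg x) xs) + neg_pairs xs"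

definition standard :: "int list \<Rightarrow> bool" where
  "standard v \<longleftrightarrow> distinct (map abs v) \<and> set (map abs v) = {1..int (length v)}"

lemma ellB_eq_sum_list: "ellB v = int (inv v) + (\<Sum>x\<leftarrow>v. if x < 0 then - x else 0)"
proof -
  have "(\<Sum>i\<in>{i. i < length v \<and> v ! i < 0}. v ! i) = (\<Sum>i\<in>{i\<in>{..<length v}. v ! i < 0}. v ! i)"
    by (rule sum.cong) auto
  also have "\<dots> = (\<Sum>i<length v. if v ! i < 0 then v ! i else 0)"
    by (rule sum.inter_filter) simp
  also have "\<dots> = (\<Sum>x\<leftarrow>v. if x < 0 then x else 0)"
    by (simp add: sum_list_sum_nth atLeast0LessThan)
  also have "\<dots> = - (\<Sum>x\<leftarrow>v. if x < 0 then - x else 0)"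
    by (induction v) auto
  finally show ?thesis
    by (simp add: ellB_def)
qed

lemma larger_is_neg_iff:
  assumes "x \<noteq> 0" "y \<noteq> 0" "\<bar>x\<bar> \<noteq> \<bar>y\<bar>"
  shows "larger_is_neg x y \<longleftrightarrow> (y < x) \<noteq> (\<bar>y\<bar> < \<bar>x\<bar>)"
  using assms by (cases "x < 0"; cases "y < 0") (auto simp: larger_is_neg_def)

lemma length_filter_add_length_filter:
  "length (filter P xs) + length (filter Q xs)
    = length (filter (\<lambda>y. P y \<noteq> Q y) xs) + 2 * length (filter (\<lambda>y. P y \<and> Q y) xs)"
  by (induction xs) auto

lemma length_filter_xor_mod2:
  "(length (filter P xs) + length (filter Q xs)) mod 2 = length (filter (\<lambda>y. P y \<noteq> Q y) xs) mod 2"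
  by (simp add: length_filter_add_length_filter)

lemma inv_add_inv_abs_mod2:
  assumes "0 \<notin> set v" "distinct (map abs v)"
  shows "(inv v + inv (map abs v)) mod 2 = neg_pairs v mod 2"
  using assms
proof (induction v)
  case (Cons x xs)
  have "filter (\<lambda>b. b < \<bar>x\<bar>) (map abs xs) = map abs (filter (\<lambda>y. \<bar>y\<bar> < \<bar>x\<bar>) xs)"
    by (simp add: filter_map comp_def)
  then have "(length (filter (\<lambda>y. y < x) xs) + length (filter (\<lambda>b. b < \<bar>x\<bar>) (map abs xs))) mod 2
      = length (filter (\<lambda>y. (y < x) \<noteq> (\<bar>y\<bar> < \<bar>x\<bar>)) xs) mod 2"
    by (simp only: length_map length_filter_xor_mod2)
  also have "filter (\<lambda>y. (y < x) \<noteq> (\<bar>y\<bar> < \<bar>x\<bar>)) xs = filter (larger_is_neg x) xs"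
  proof (rule filter_cong[OF refl])
    fix y assume "y \<in> set xs"
    with Cons.prems have "y \<noteq> 0" "x \<noteq> 0" "\<bar>x\<bar> \<noteq> \<bar>y\<bar>"
      by (auto simp: image_iff)
    then show "((y < x) \<noteq> (\<bar>y\<bar> < \<bar>x\<bar>)) = larger_is_neg x y"
      by (simp add: larger_is_neg_iff)
  qed
  finally have head: "(length (filter (\<lambda>y. y < x) xs) + length (filter (\<lambda>b. b < \<bar>x\<bar>) (map abs xs))) mod 2
      = length (filter (larger_is_neg x) xs) mod 2" .
  have tail: "(inv xs + inv (map abs xs)) mod 2 = neg_pairs xs mod 2"
    using Cons by simp
  have "inv (x # xs) + inv (map abs (x # xs))
      = (length (filter (\<lambda>y. y < x) xs) + length (filter (\<lambda>b. b < \<bar>x\<bar>) (map abs xs)))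
        + (inv xs + inv (map abs xs))"
    by (simp add: inv_Cons)
  then show ?case
    using mod_add_cong[OF head tail] by simp
qed simp

lemma sum_abs_below_Cons:
  "(\<Sum>x\<leftarrow>u. if x < 0 then int (abs_below (z # v) x) else 0)
    = (\<Sum>x\<leftarrow>u. if x < 0 then int (abs_below v x) else 0) + int (length (filter (\<lambda>x. x < 0 \<and> \<bar>z\<bar> < \<bar>x\<bar>) u))"
  by (induction u) (auto simp: abs_below_def)

lemma neg_pairs_eq_sum_abs_below:
  "int (neg_pairs v) = (\<Sum>x\<leftarrow>v. if x < 0 then int (abs_below v x) else 0)"
proof (induction v)
  case (Cons z v)
  have "length (filter (larger_is_neg z) v)
      = (if z < 0 then abs_below v z else 0) + length (filter (\<lambda>x. x < 0 \<and> \<bar>z\<bar> < \<bar>x\<bar>) v)"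
    by (induction v) (auto simp: larger_is_neg_def abs_below_def)
  then show ?case
    using Cons by (simp add: sum_abs_below_Cons abs_below_def)
qed simp

lemma sum_neg_eq:
  assumes "\<forall>x\<in>set u. x < 0 \<longrightarrow> - x = int (abs_below v x) + 1"
  shows "(\<Sum>x\<leftarrow>u. if x < 0 then - x else 0)
    = int (neg_count u) + (\<Sum>x\<leftarrow>u. if x < 0 then int (abs_below v x) else 0)"
  using assms by (induction u) (auto simp: neg_count_def)

lemma standard_nonzero: "standard v \<Longrightarrow> 0 \<notin> set v"
  by (force simp: standard_def)

lemma standard_abs_below:
  assumes "standard v" "x \<in> set v"
  shows "int (abs_below v x) = \<bar>x\<bar> - 1"
proof -
  have x: "\<bar>x\<bar> \<in> {1..int (length v)}"
    using assms unfolding standard_def by (metis image_eqI list.set_map)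
  have "abs_below v x = length (filter (\<lambda>a. a < \<bar>x\<bar>) (map abs v))"
    by (simp add: abs_below_def filter_map comp_def)
  also have "\<dots> = card ({a. a < \<bar>x\<bar>} \<inter> set (map abs v))"
    using assms(1) unfolding standard_def by (intro distinct_length_filter) simp
  also have "{a. a < \<bar>x\<bar>} \<inter> set (map abs v) = {1..<\<bar>x\<bar>}"
    using assms(1) x by (auto simp: standard_def)
  finally show ?thesis
    using x by auto
qed

lemma ellB_mod2_standard:
  assumes "standard v"
  shows "ellB v mod 2 = int ((inv (map abs v) + neg_count v) mod 2)"
proof -
  have "\<forall>x\<in>set v. x < 0 \<longrightarrow> - x = int (abs_below v x) + 1"
    using standard_abs_below[OF assms] by auto
  then have "ellB v = int (inv v + neg_count v + neg_pairs v)"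
    by (simp add: ellB_eq_sum_list sum_neg_eq neg_pairs_eq_sum_abs_below)
  moreover have "(inv v + inv (map abs v)) mod 2 = neg_pairs v mod 2"
    using assms by (simp add: inv_add_inv_abs_mod2 standard_nonzero standard_def)
  then have "(inv v + neg_count v + neg_pairs v) mod 2 = (inv (map abs v) + neg_count v) mod 2"
    by presburger
  ultimately show ?thesis
    by (metis of_nat_mod of_nat_numeral)
qed

definition rank_in :: "int set \<Rightarrow> int \<Rightarrow> nat" where
  "rank_in S a = card {y \<in> S. y \<le> a}"

lemma strict_mono_on_rank_in:
  assumes "finite S"
  shows "strict_mono_on S (rank_in S)"
proof (rule strict_mono_onI)
  fix a b assume "a \<in> S" "b \<in> S" "a < b"
  then have "b \<in> {y \<in> S. y \<le> b} - {y \<in> S. y \<le> a}" "{y \<in> S. y \<le> a} \<subseteq> {y \<in> S. y \<le> b}"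
    by auto
  then have "{y \<in> S. y \<le> a} \<subset> {y \<in> S. y \<le> b}"
    by blast
  then show "rank_in S a < rank_in S b"
    unfolding rank_in_def using assms by (intro psubset_card_mono) auto
qed

lemma rank_in_image:
  assumes "finite S"
  shows "rank_in S ` S = {1..card S}"
proof (rule card_subset_eq)
  show "rank_in S ` S \<subseteq> {1..card S}"
    using assms by (auto simp: rank_in_def Suc_le_eq card_gt_0_iff intro: card_mono)
  show "card (rank_in S ` S) = card {1..card S}"
    using strict_mono_on_imp_inj_on[OF strict_mono_on_rank_in[OF assms]]
    by (simp add: card_image)
qed simp

lemma reduction_eq: "reduction u = map (\<lambda>x. sgn x * int (rank_in (abs ` set u) \<bar>x\<bar>)) u"
  by (simp add: reduction_def rank_in_def)

lemma map_abs_reduction: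
  assumes "0 \<notin> set u"
  shows "map abs (reduction u) = map (int \<circ> rank_in (abs ` set u)) (map abs u)"
  using assms by (auto simp: reduction_eq abs_mult sgn_if)

lemma standard_reduction:
  assumes "0 \<notin> set u" "distinct (map abs u)"
  shows "standard (reduction u)"
proof -
  let ?S = "abs ` set u"
  have "inj_on (rank_in ?S) ?S"
    by (rule strict_mono_on_imp_inj_on[OF strict_mono_on_rank_in]) simp
  then have "inj_on (int \<circ> rank_in ?S) ?S"
    by (simp add: inj_on_def)
  moreover have "card ?S = length u"
    using assms(2) by (metis distinct_card length_map list.set_map)
  ultimately have "distinct (map abs (reduction u))"
    using assms by (simp add: map_abs_reduction distinct_map comp_inj_on)
  moreover have "set (map abs (reduction u)) = (int \<circ> rank_in ?S) ` ?S"
    by (simp only: map_abs_reduction[OF assms(1)] set_map)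
  moreover have "(int \<circ> rank_in ?S) ` ?S = {1..int (length u)}"
    using \<open>card ?S = length u\<close>
    by (simp only: image_comp[symmetric] rank_in_image[OF finite_imageI[OF finite_set]]
        image_int_atLeastAtMost) simp
  ultimately show ?thesis
    by (simp add: standard_def reduction_def)
qed

lemma inv_abs_reduction:
  assumes "0 \<notin> set u"
  shows "inv (map abs (reduction u)) = inv (map abs u)"
proof -
  have "strict_mono_on (set (map abs u)) (int \<circ> rank_in (abs ` set u))"
    using strict_mono_on_rank_in[of "abs ` set u"] by (auto simp: strict_mono_on_def)
  then show ?thesis
    unfolding map_abs_reduction[OF assms] by (rule inv_map_strict_mono)
qed

lemma neg_count_reduction: "neg_count (reduction u) = neg_count u"
proof -
  have "sgn x * int (rank_in (abs ` set u) \<bar>x\<bar>) < 0 \<longleftrightarrow> x < 0" if "x \<in> set u" for x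
  proof -
    have "\<And>r::int. 0 < r \<Longrightarrow> sgn x * r < 0 \<longleftrightarrow> x < 0"
      by (simp add: mult_less_0_iff)
    moreover have "0 < rank_in (abs ` set u) \<bar>x\<bar>"
      using that by (auto simp: rank_in_def card_gt_0_iff)
    ultimately show ?thesis
      by simp
  qed
  then have "filter (\<lambda>x. sgn x * int (rank_in (abs ` set u) \<bar>x\<bar>) < 0) u = filter (\<lambda>x. x < 0) u"
    by (intro filter_cong) auto
  then show ?thesis
    by (simp add: neg_count_def reduction_eq filter_map comp_def)
qed

text \<open>Letters paired with position labels. Deleting fixed points \<open>(k, k)\<close> from a signed
  permutation with its positions attached preserves this invariant.\<close>

definition labelled_signed_perm :: "(int \<times> int) list \<Rightarrow> bool" where
  "labelled_signed_perm P \<longleftrightarrow> distinct (map (abs \<circ> fst) P) \<and> sorted_wrt (<) (map snd P)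
      \<and> set (map (abs \<circ> fst) P) = set (map snd P)"

lemma labelled_signed_perm_remove_fixed:
  assumes "labelled_signed_perm (A @ (k, k) # B)"
  shows "labelled_signed_perm (A @ B)"
    and "inv (map (abs \<circ> fst) (A @ (k, k) # B)) mod 2 = inv (map (abs \<circ> fst) (A @ B)) mod 2"
proof -
  let ?a = "map (abs \<circ> fst) A" and ?b = "map (abs \<circ> fst) B"
  have dist: "distinct (?a @ \<bar>k\<bar> # ?b)" and sorted: "sorted_wrt (<) (map snd A @ k # map snd B)"
    and same: "set (?a @ \<bar>k\<bar> # ?b) = set (map snd A @ k # map snd B)"
    using assms by (auto simp: labelled_signed_perm_def)
  have "k \<in> set (?a @ \<bar>k\<bar> # ?b)"
    using same by simp
  then have k: "\<bar>k\<bar> = k"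
    by auto
  have below: "\<forall>p\<in>set (map snd A). p < k" and above: "\<forall>p\<in>set (map snd B). k < p"
    using sorted by (auto simp: sorted_wrt_append)
  have "k \<notin> set (map snd A)" "k \<notin> set (map snd B)"
    using below above by auto
  then have same': "set (?a @ ?b) = set (map snd (A @ B))"
    using same dist k by auto
  then show "labelled_signed_perm (A @ B)"
    using dist sorted by (simp add: labelled_signed_perm_def sorted_wrt_append)
  have "distinct (?a @ ?b)"
    using dist by simp
  then have "length (filter (\<lambda>a. a < k) (?a @ ?b)) = card ({a. a < k} \<inter> set (map snd (A @ B)))"
    by (simp only: distinct_length_filter same')
  also have "\<dots> = length (filter (\<lambda>a. a < k) (map snd (A @ B)))"
  proof -
    have "sorted_wrt (<) (map snd (A @ B))"
      using sorted by (simp add: sorted_wrt_append)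
    then show ?thesis
      by (simp only: distinct_length_filter strict_sorted_iff)
  qed
  also have "\<dots> = length A"
    using below above by (force simp: filter_empty_conv)
  finally have "inv (?a @ k # ?b) = inv (?a @ ?b) + 2 * length (filter (\<lambda>a. k < a) ?a)"
    using dist k by (intro inv_remove_balanced) auto
  then show "inv (map (abs \<circ> fst) (A @ (k, k) # B)) mod 2 = inv (map (abs \<circ> fst) (A @ B)) mod 2"
    using k by simp
qed

lemma inv_filter_fixed_mod2:
  "labelled_signed_perm P
    \<Longrightarrow> inv (map (abs \<circ> fst) (filter (\<lambda>(x, j). x \<noteq> j) P)) mod 2 = inv (map (abs \<circ> fst) P) mod 2"
proof (induction "length P" arbitrary: P rule: less_induct)
  case less
  show ?case
  proof (cases "\<exists>k. (k, k) \<in> set P")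
    case False
    then have "filter (\<lambda>(x, j). x \<noteq> j) P = P"
      by (auto intro!: filter_True)
    then show ?thesis
      by simp
  next
    case True
    then obtain k A B where P: "P = A @ (k, k) # B"
      by (meson split_list)
    have "length (A @ B) < length P" and "labelled_signed_perm (A @ B)"
      using P less.prems labelled_signed_perm_remove_fixed(1) by auto
    then have "inv (map (abs \<circ> fst) (filter (\<lambda>(x, j). x \<noteq> j) (A @ B))) mod 2
        = inv (map (abs \<circ> fst) (A @ B)) mod 2"
      by (rule less.hyps)
    then show ?thesis
      using P labelled_signed_perm_remove_fixed(2) less.prems by simp
  qed
qed

lemma neg_count_filter_fixed:
  "\<forall>(x, j)\<in>set P. 0 < j \<Longrightarrow> neg_count (map fst (filter (\<lambda>(x, j). x \<noteq> j) P)) = neg_count (map fst P)"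
  by (induction P) (auto simp: neg_count_def)

definition with_positions :: "int list \<Rightarrow> (int \<times> int) list" where
  "with_positions w = zip w (map int [1..<length w + 1])"

definition nonfixed_letters :: "int list \<Rightarrow> int list" where
  "nonfixed_letters w = map fst (filter (\<lambda>(x, j). x \<noteq> j) (with_positions w))"

lemma dp_eq_reduction: "dp w = reduction (nonfixed_letters w)"
  by (simp add: dp_def nonfixed_letters_def with_positions_def zip_map2 filter_map comp_def split_def)

lemma map_fst_with_positions: "map fst (with_positions w) = w"
  by (simp add: with_positions_def map_fst_zip del: upt_Suc)

lemma with_positions_pos: "(x, j) \<in> set (with_positions w) \<Longrightarrow> 0 < j"
  by (auto simp: with_positions_def dest!: set_zip_rightD simp del: upt_Suc)

lemma labelled_signed_perm_with_positions:
  assumes "standard w"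
  shows "labelled_signed_perm (with_positions w)"
proof -
  have "set (map int [1..<length w + 1]) = {1..int (length w)}"
    unfolding set_map set_upt image_int_atLeastLessThan by auto
  then show ?thesis
    using assms by (simp add: with_positions_def labelled_signed_perm_def standard_def
        map_map[symmetric] sorted_wrt_map del: map_map upt_Suc)
qed

lemma set_nonfixed_letters: "set (nonfixed_letters w) \<subseteq> set w"
proof -
  have "set (nonfixed_letters w) \<subseteq> set (map fst (with_positions w))"
    unfolding nonfixed_letters_def by auto
  then show ?thesis
    by (simp only: map_fst_with_positions)
qed

lemma distinct_abs_nonfixed_letters:
  assumes "distinct (map abs w)"
  shows "distinct (map abs (nonfixed_letters w))"
proof -
  have "distinct (map (abs \<circ> fst) (with_positions w))"
    using assms by (simp only: map_map[symmetric] map_fst_with_positions)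
  then show ?thesis
    unfolding nonfixed_letters_def map_map by (rule distinct_map_filter)
qed

lemma neg_count_nonfixed_letters: "neg_count (nonfixed_letters w) = neg_count w"
proof -
  have "\<forall>(x, j)\<in>set (with_positions w). 0 < j"
    using with_positions_pos by blast
  then show ?thesis
    unfolding nonfixed_letters_def by (simp only: neg_count_filter_fixed map_fst_with_positions)
qed

lemma inv_abs_nonfixed_letters_mod2:
  assumes "standard w"
  shows "inv (map abs (nonfixed_letters w)) mod 2 = inv (map abs w) mod 2"
proof -
  have "map (abs \<circ> fst) (with_positions w) = map abs w"
    by (simp only: map_map[symmetric] map_fst_with_positions)
  then show ?thesis
    using inv_filter_fixed_mod2[OF labelled_signed_perm_with_positions[OF assms]]
    by (simp add: nonfixed_letters_def)
qed

theorem mainTheorem10: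
  fixes n :: nat and w :: "int list"
  assumes "w \<in> signed_perms n"
  shows "ellB w mod 2 = ellB (dp w) mod 2"
proof -
  let ?u = "nonfixed_letters w"
  have std: "standard w"
    using assms by (simp add: signed_perms_def standard_def)
  have "0 \<notin> set ?u"
    using standard_nonzero[OF std] set_nonfixed_letters by blast
  moreover have "distinct (map abs ?u)"
    using std by (simp add: standard_def distinct_abs_nonfixed_letters)
  ultimately have "ellB (dp w) mod 2 = int ((inv (map abs ?u) + neg_count ?u) mod 2)"
    by (simp add: dp_eq_reduction ellB_mod2_standard standard_reduction inv_abs_reduction
        neg_count_reduction)
  also have "(inv (map abs ?u) + neg_count ?u) mod 2 = (inv (map abs w) + neg_count w) mod 2"
    using mod_add_cong[OF inv_abs_nonfixed_letters_mod2[OF std] refl]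
    by (simp add: neg_count_nonfixed_letters)
  finally show ?thesis
    using ellB_mod2_standard[OF std] by simp
qed

end
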